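(* Let $k_1,k_2\ge1$ be integers. Then $\mathcal{J}^{12}_{[-1,\infty),[0,\infty)}=\mathcal{J}^{12}_{[0,\infty),[-1,\infty)}=\mathcal{J}^{12}_{[0,\infty),[0,\infty)}$.
   Context: $\mathcal{F}$ is the free $\mathbb{Z}[A^{\pm1}]$-module with basis the symbols $s_1^{l_1}s_2^{l_2}s_3^{l_3}$, $l_i\ge 0$, extended multilinearly to integer exponents by $s_i^{-1}=0$ and $s_i^{n}=-s_i^{-n-2}$ for $n\le -2$. For $n_i\in\mathbb{Z}$, $R_{12}(n_1,n_2,n_3)=-A^{-n_1-n_2-2}s_1^{n_1}s_2^{n_2}s_3^{n_3}-A^{-n_1-n_2+2}s_1^{n_1-2}s_2^{n_2-2}s_3^{n_3}-A^{-n_1-n_2}s_1^{n_1-1}s_2^{n_2-1}s_3^{n_3+1}-A^{-n_1-n_2}s_1^{n_1-1}s_2^{n_2-1}s_3^{n_3-1}$ and $R_{12}^{n_1,n_2,n_3}=R_{12}(n_1,n_2,n_3)-R_{12}(-n_1+k_1,-n_2+k_2,n_3)$. For $I_1,I_2\subseteq\mathbb{R}$, $\mathcal{J}^{12}_{I_1,I_2}$ is the submodule of $\mathcal{F}$ generated by $\{R^{n_1,n_2,n_3}_{12}: n_1\in I_1\cap\mathbb{Z},\ n_2\in I_2\cap\mathbb{Z},\ n_3\in\mathbb{Z}_{\ge0}\}$. *)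

theory Defs
  imports Complex_Main "HOL-Library.Poly_Mapping"
begin

text \<open>The ring Z[A^{+-1}] of Laurent polynomials is the group ring of (int,+) over int,
  i.e. finitely supported functions int to int with convolution product.\<close>
type_synonym laurent = "int \<Rightarrow>\<^sub>0 int"

text \<open>The free Z[A^{+-1}]-module F with basis s1^l1 s2^l2 s3^l3, l_i >= 0:
  finitely supported maps from exponent triples to Laurent coefficients.\<close>
type_synonym fmod = "(nat \<times> nat \<times> nat) \<Rightarrow>\<^sub>0 laurent"

definition Apow :: "int \<Rightarrow> laurent" where
  "Apow k = Poly_Mapping.single k 1"

definition smult_F :: "laurent \<Rightarrow> fmod \<Rightarrow> fmod" where
  "smult_F p x = Poly_Mapping.map (\<lambda>c. p * c) x"

text \<open>Extension to integer exponents: s^n = sgn_ext n * s^(exp_ext n), where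
  s^{-1} = 0 and s^n = - s^{-n-2} for n <= -2.\<close>
definition sgn_ext :: "int \<Rightarrow> int" where
  "sgn_ext n = (if n \<ge> 0 then 1 else if n = -1 then 0 else -1)"

definition exp_ext :: "int \<Rightarrow> nat" where
  "exp_ext n = (if n \<ge> 0 then nat n else nat (-n - 2))"

definition mon :: "laurent \<Rightarrow> int \<Rightarrow> int \<Rightarrow> int \<Rightarrow> fmod" where
  "mon c n1 n2 n3 = Poly_Mapping.single (exp_ext n1, exp_ext n2, exp_ext n3)
      (c * of_int (sgn_ext n1 * sgn_ext n2 * sgn_ext n3))"

definition R12 :: "int \<Rightarrow> int \<Rightarrow> int \<Rightarrow> fmod" where
  "R12 n1 n2 n3 =
     - mon (Apow (-n1 - n2 - 2)) n1 n2 n3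
     - mon (Apow (-n1 - n2 + 2)) (n1 - 2) (n2 - 2) n3
     - mon (Apow (-n1 - n2)) (n1 - 1) (n2 - 1) (n3 + 1)
     - mon (Apow (-n1 - n2)) (n1 - 1) (n2 - 1) (n3 - 1)"

definition R12s :: "int \<Rightarrow> int \<Rightarrow> int \<Rightarrow> int \<Rightarrow> int \<Rightarrow> fmod" where
  "R12s k1 k2 n1 n2 n3 = R12 n1 n2 n3 - R12 (-n1 + k1) (-n2 + k2) n3"

inductive_set submod_gen :: "fmod set \<Rightarrow> fmod set" for S where
  zero: "0 \<in> submod_gen S"
| gen: "g \<in> S \<Longrightarrow> g \<in> submod_gen S"
| add: "x \<in> submod_gen S \<Longrightarrow> y \<in> submod_gen S \<Longrightarrow> x + y \<in> submod_gen S"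
| smult: "x \<in> submod_gen S \<Longrightarrow> smult_F p x \<in> submod_gen S"

definition J12 :: "int \<Rightarrow> int \<Rightarrow> real set \<Rightarrow> real set \<Rightarrow> fmod set" where
  "J12 k1 k2 I1 I2 = submod_gen
     {R12s k1 k2 n1 n2 (int n3) | n1 n2 n3. real_of_int n1 \<in> I1 \<and> real_of_int n2 \<in> I2}"

end

theory Submission
  imports Defs
begin

(* The generators with n1 = -1 (resp. n2 = -1) are rewritten through generators with nonnegative
   indices by means of two weighted stencils of four relations each, comb_Y and comb_Z. The
   involution (n1, n2) \<mapsto> (k1 - n1, k2 - n2) built into R12s carries a Y-stencil onto a
   Z-stencil, so comb_Y (R12s k1 k2) = comb_Y R12 - comb_Z R12 at the reflected point, and
   symmetrically. Expanded into monomials, comb_Y R12 is skew under s1^n = -s1^(-n-2) and comb_Z R12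
   under s2^n = -s2^(-n-2); as F has no 2-torsion, comb_Y R12 vanishes at n1 = -1 and comb_Z R12 at
   n2 = 1. At these fixed points the stencil identities express the unwanted generator through
   admissible ones. *)

lemma lookup_smult_F: "Poly_Mapping.lookup (smult_F p x) m = p * Poly_Mapping.lookup x m"
  unfolding smult_F_def by (simp add: Poly_Mapping.map.rep_eq when_def)

lemma smult_F_add: "smult_F p (x + y) = smult_F p x + smult_F p y"
  by (rule poly_mapping_eqI) (simp add: lookup_smult_F lookup_add algebra_simps)

lemma smult_F_diff: "smult_F p (x - y) = smult_F p x - smult_F p y"
  by (rule poly_mapping_eqI) (simp add: lookup_smult_F lookup_minus algebra_simps)

lemma smult_F_minus: "smult_F p (- x) = - smult_F p x"
  by (rule poly_mapping_eqI) (simp add: lookup_smult_F)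

lemma smult_F_1: "smult_F 1 x = x"
  by (rule poly_mapping_eqI) (simp add: lookup_smult_F)

lemma smult_F_neg_1: "smult_F (- 1) x = - x"
  by (rule poly_mapping_eqI) (simp add: lookup_smult_F)

lemma smult_F_mon: "smult_F p (mon q a b d) = mon (p * q) a b d"
  unfolding smult_F_def mon_def by (simp add: mult.assoc)

lemma mon_minus: "mon (- p) a b d = - mon p a b d"
  unfolding mon_def by (simp add: single_uminus)

lemma Apow_mult: "Apow i * Apow j = Apow (i + j)"
  unfolding Apow_def by (simp add: mult_single)

lemma Apow_0: "Apow 0 = 1"
  unfolding Apow_def by simp

lemma poly_mapping_add_self_eq_0:
  fixes x :: "'a \<Rightarrow>\<^sub>0 'b::monoid_add"
  assumes no_2_torsion: "\<And>c::'b. c + c = 0 \<Longrightarrow> c = 0" and "x + x = 0"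
  shows "x = 0"
proof (rule poly_mapping_eqI)
  fix m
  have "Poly_Mapping.lookup x m + Poly_Mapping.lookup x m = 0"
    using arg_cong[OF \<open>x + x = 0\<close>, of "\<lambda>y. Poly_Mapping.lookup y m"]
    by (simp only: lookup_add) simp
  then show "Poly_Mapping.lookup x m = Poly_Mapping.lookup 0 m"
    unfolding lookup_zero by (rule no_2_torsion)
qed

lemma fmod_add_self_eq_0: "(x::fmod) + x = 0 \<Longrightarrow> x = 0"
proof (rule poly_mapping_add_self_eq_0)
  show "c + c = 0 \<Longrightarrow> c = 0" for c :: laurent
    by (rule poly_mapping_add_self_eq_0) simp_all
qed

lemma mon_reflect_s1: "mon c a b d = - mon c (- a - 2) b d"
  and mon_reflect_s2: "mon c a b d = - mon c a (- b - 2) d"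
  and mon_reflect_s3: "mon c a b d = - mon c a b (- d - 2)"
  unfolding mon_def sgn_ext_def exp_ext_def by (auto simp: single_uminus)

lemma mon_s3_neg_1: "mon c a b (- 1) = 0"
  unfolding mon_def sgn_ext_def by simp

lemma R12_s3_neg_1: "R12 a b (- 1) = 0"
  using mon_reflect_s3[of _ _ _ "- 2"] unfolding R12_def by (simp add: mon_s3_neg_1)

lemma R12s_s3_neg_1: "R12s k1 k2 a b (- 1) = 0"
  unfolding R12s_def by (simp add: R12_s3_neg_1)

lemma R12s_reflect: "R12s k1 k2 a b c = - R12s k1 k2 (k1 - a) (k2 - b) c"
  unfolding R12s_def by simp

lemma submod_gen_uminus: "x \<in> submod_gen S \<Longrightarrow> - x \<in> submod_gen S"
  using submod_gen.smult[of x S "- 1"] by (simp add: smult_F_neg_1)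

lemma submod_gen_diff: "x \<in> submod_gen S \<Longrightarrow> y \<in> submod_gen S \<Longrightarrow> x - y \<in> submod_gen S"
  using submod_gen.add[OF _ submod_gen_uminus, of x S y] by simp

lemma submod_gen_subset: "S \<subseteq> submod_gen T \<Longrightarrow> submod_gen S \<subseteq> submod_gen T"
proof
  fix x assume "S \<subseteq> submod_gen T" and "x \<in> submod_gen S"
  from \<open>x \<in> submod_gen S\<close> show "x \<in> submod_gen T"
    by induction (use \<open>S \<subseteq> submod_gen T\<close> in \<open>auto intro: submod_gen.intros\<close>)
qed

lemma J12_zero: "0 \<in> J12 k1 k2 I1 I2"
  and J12_add: "x \<in> J12 k1 k2 I1 I2 \<Longrightarrow> y \<in> J12 k1 k2 I1 I2 \<Longrightarrow> x + y \<in> J12 k1 k2 I1 I2"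
  and J12_diff: "x \<in> J12 k1 k2 I1 I2 \<Longrightarrow> y \<in> J12 k1 k2 I1 I2 \<Longrightarrow> x - y \<in> J12 k1 k2 I1 I2"
  and J12_uminus: "x \<in> J12 k1 k2 I1 I2 \<Longrightarrow> - x \<in> J12 k1 k2 I1 I2"
  and J12_smult: "x \<in> J12 k1 k2 I1 I2 \<Longrightarrow> smult_F p x \<in> J12 k1 k2 I1 I2"
  unfolding J12_def
  by (auto intro: submod_gen.intros submod_gen_diff submod_gen_uminus)

lemma R12s_in_J12:
  "real_of_int n1 \<in> I1 \<Longrightarrow> real_of_int n2 \<in> I2 \<Longrightarrow> R12s k1 k2 n1 n2 (int n3) \<in> J12 k1 k2 I1 I2"
  unfolding J12_def by (rule submod_gen.gen) blast

lemma J12_subsetI: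
  assumes "\<And>n1 n2 n3. real_of_int n1 \<in> I1 \<Longrightarrow> real_of_int n2 \<in> I2 \<Longrightarrow>
             R12s k1 k2 n1 n2 (int n3) \<in> J12 k1 k2 I1' I2'"
  shows "J12 k1 k2 I1 I2 \<subseteq> J12 k1 k2 I1' I2'"
  using assms unfolding J12_def by (intro submod_gen_subset) blast

lemma J12_mono: "I1 \<subseteq> I1' \<Longrightarrow> I2 \<subseteq> I2' \<Longrightarrow> J12 k1 k2 I1 I2 \<subseteq> J12 k1 k2 I1' I2'"
  by (intro J12_subsetI R12s_in_J12) auto

definition comb_Y :: "(int \<Rightarrow> int \<Rightarrow> int \<Rightarrow> fmod) \<Rightarrow> int \<Rightarrow> int \<Rightarrow> int \<Rightarrow> fmod" where
  "comb_Y f x y c = f x y c + smult_F (Apow 4) (f (x + 2) (y - 2) c)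
     + smult_F (Apow 2) (f (x + 1) (y - 1) (c + 1)) + smult_F (Apow 2) (f (x + 1) (y - 1) (c - 1))"

definition comb_Z :: "(int \<Rightarrow> int \<Rightarrow> int \<Rightarrow> fmod) \<Rightarrow> int \<Rightarrow> int \<Rightarrow> int \<Rightarrow> fmod" where
  "comb_Z f x y c = smult_F (Apow 4) (f x y c) + f (x + 2) (y - 2) c
     + smult_F (Apow 2) (f (x + 1) (y - 1) (c + 1)) + smult_F (Apow 2) (f (x + 1) (y - 1) (c - 1))"

(* (n1, n2) \<mapsto> (k1 - n1, k2 - n2) maps the stencil points (x, y), (x + 2, y - 2), (x + 1, y - 1)
   onto those based at (k1 - x - 2, k2 - y + 2), exchanging the first two and hence the weights. *)
lemma comb_Y_R12s:
  "comb_Y (R12s k1 k2) x y c = comb_Y R12 x y c - comb_Z R12 (k1 - x - 2) (k2 - y + 2) c"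
  and comb_Z_R12s:
  "comb_Z (R12s k1 k2) x y c = comb_Z R12 x y c - comb_Y R12 (k1 - x - 2) (k2 - y + 2) c"
  unfolding comb_Y_def comb_Z_def R12s_def smult_F_diff by (simp_all add: algebra_simps)

(* The monomial at offset (i, j, l) from the base point (x, y, z); the A-exponent e - x - y absorbs
   the prefactor A^(-n1-n2) of R12, so the expansions below have offsets independent of the base. *)
definition mon_rel :: "int \<Rightarrow> int \<Rightarrow> int \<Rightarrow> int \<Rightarrow> int \<Rightarrow> int \<Rightarrow> int \<Rightarrow> fmod" where
  "mon_rel x y z e i j l = mon (Apow (e - x - y)) (x + i) (y + j) (z + l)"

lemma mon_eq_mon_rel: "mon (Apow e) a b d = mon_rel x y z (e + x + y) (a - x) (b - y) (d - z)"
  unfolding mon_rel_def by simp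

lemma mon_rel_reflect_s1:
  "smult_F (Apow (- 2 - 2 * x)) (mon_rel (- 2 - x) y z e i j l) = - mon_rel x y z e (- i) j l"
  unfolding mon_rel_def smult_F_mon Apow_mult by (subst mon_reflect_s1) (simp add: algebra_simps)

lemma mon_rel_reflect_s2:
  "smult_F (Apow (2 - 2 * y)) (mon_rel x (2 - y) z e i j l) = - mon_rel x y z e i (- 4 - j) l"
  unfolding mon_rel_def smult_F_mon Apow_mult by (subst mon_reflect_s2) (simp add: algebra_simps)

lemmas smult_F_simps = smult_F_add smult_F_diff smult_F_minus smult_F_mon Apow_mult mon_minus

lemma comb_Y_R12_expand:
  "comb_Y R12 x y c =
     - mon_rel x y c (- 2) 0 0 0 - mon_rel x y c 2 (- 2) (- 2) 0
     - mon_rel x y c 0 (- 1) (- 1) 1 - mon_rel x y c 0 (- 1) (- 1) (- 1)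
     - mon_rel x y c 2 2 (- 2) 0 - mon_rel x y c 6 0 (- 4) 0
     - mon_rel x y c 4 1 (- 3) 1 - mon_rel x y c 4 1 (- 3) (- 1)
     - mon_rel x y c 0 1 (- 1) 1 - mon_rel x y c 4 (- 1) (- 3) 1
     - mon_rel x y c 2 0 (- 2) 2 - mon_rel x y c 2 0 (- 2) 0
     - mon_rel x y c 0 1 (- 1) (- 1) - mon_rel x y c 4 (- 1) (- 3) (- 1)
     - mon_rel x y c 2 0 (- 2) 0 - mon_rel x y c 2 0 (- 2) (- 2)"
  unfolding comb_Y_def R12_def smult_F_simps
  unfolding mon_eq_mon_rel[of _ _ _ _ x y c]
  by (simp add: algebra_simps)

lemma comb_Z_R12_expand:
  "comb_Z R12 x y c =
     - mon_rel x y c 2 0 0 0 - mon_rel x y c 6 (- 2) (- 2) 0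
     - mon_rel x y c 4 (- 1) (- 1) 1 - mon_rel x y c 4 (- 1) (- 1) (- 1)
     - mon_rel x y c (- 2) 2 (- 2) 0 - mon_rel x y c 2 0 (- 4) 0
     - mon_rel x y c 0 1 (- 3) 1 - mon_rel x y c 0 1 (- 3) (- 1)
     - mon_rel x y c 0 1 (- 1) 1 - mon_rel x y c 4 (- 1) (- 3) 1
     - mon_rel x y c 2 0 (- 2) 2 - mon_rel x y c 2 0 (- 2) 0
     - mon_rel x y c 0 1 (- 1) (- 1) - mon_rel x y c 4 (- 1) (- 3) (- 1)
     - mon_rel x y c 2 0 (- 2) 0 - mon_rel x y c 2 0 (- 2) (- 2)"
  unfolding comb_Z_def R12_def smult_F_simps
  unfolding mon_eq_mon_rel[of _ _ _ _ x y c]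
  by (simp add: algebra_simps)

(* The reflections of mon_rel permute the sixteen terms of the expansions (i \<mapsto> -i, resp.
   j \<mapsto> -4 - j). *)
lemma comb_Y_R12_reflect:
  "comb_Y R12 x y c + smult_F (Apow (- 2 - 2 * x)) (comb_Y R12 (- 2 - x) y c) = 0"
  unfolding comb_Y_R12_expand[of x] comb_Y_R12_expand[of "- 2 - x"] smult_F_simps mon_rel_reflect_s1
  by (simp add: algebra_simps)

lemma comb_Z_R12_reflect:
  "comb_Z R12 x y c + smult_F (Apow (2 - 2 * y)) (comb_Z R12 x (2 - y) c) = 0"
  unfolding comb_Z_R12_expand[of x y] comb_Z_R12_expand[of x "2 - y"] smult_F_simps mon_rel_reflect_s2
  by (simp add: algebra_simps)

lemma comb_Y_R12_at_neg_1: "comb_Y R12 (- 1) y c = 0"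
proof (rule fmod_add_self_eq_0)
  have "- 2 - 2 * (- 1) = (0::int)" and "- 2 - (- 1) = (- 1::int)"
    by simp_all
  then show "comb_Y R12 (- 1) y c + comb_Y R12 (- 1) y c = 0"
    using comb_Y_R12_reflect[of "- 1" y c] by (simp only: Apow_0 smult_F_1)
qed

lemma comb_Z_R12_at_1: "comb_Z R12 x 1 c = 0"
proof (rule fmod_add_self_eq_0)
  have "2 - 2 * 1 = (0::int)" and "2 - 1 = (1::int)"
    by simp_all
  then show "comb_Z R12 x 1 c + comb_Z R12 x 1 c = 0"
    using comb_Z_R12_reflect[of x 1 c] by (simp only: Apow_0 smult_F_1)
qed

lemma comb_Y_R12_reflect':
  "comb_Y R12 x y c = - smult_F (Apow (- 2 - 2 * x)) (comb_Y R12 (- 2 - x) y c)"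
  using comb_Y_R12_reflect[of x y c] by (simp add: eq_neg_iff_add_eq_0)

lemma comb_Z_R12_reflect':
  "comb_Z R12 x y c = - smult_F (Apow (2 - 2 * y)) (comb_Z R12 x (2 - y) c)"
  using comb_Z_R12_reflect[of x y c] by (simp add: eq_neg_iff_add_eq_0)

lemma R12s_in_J12_nonneg:
  assumes "0 \<le> a \<and> 0 \<le> b \<or> a \<le> k1 \<and> b \<le> k2" and "- 1 \<le> c"
  shows "R12s k1 k2 a b c \<in> J12 k1 k2 {0..} {0..}"
proof -
  have nonneg: "R12s k1 k2 a' b' c \<in> J12 k1 k2 {0..} {0..}" if "0 \<le> a'" "0 \<le> b'" "0 \<le> c" for a' b'
    using R12s_in_J12[of a' "{0..}" b' "{0..}" k1 k2 "nat c"] that by simp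
  show ?thesis
  proof (cases "c = - 1")
    case True
    then show ?thesis by (simp add: R12s_s3_neg_1 J12_zero)
  next
    case False
    then show ?thesis
      using assms nonneg[of a b] nonneg[of "k1 - a" "k2 - b"] R12s_reflect[of k1 k2 a b c]
      by (auto intro: J12_uminus)
  qed
qed

lemma comb_Z_R12_in_J12_nonneg:
  assumes "1 \<le> k1" and "0 \<le> c"
  shows "comb_Z R12 (k1 - 1) y c \<in> J12 k1 k2 {0..} {0..}"
proof -
  have main: "comb_Z R12 (k1 - 1) y' c \<in> J12 k1 k2 {0..} {0..}" if "2 \<le> y'" for y'
  proof -
    have "comb_Z R12 (k1 - 1) y' c = comb_Z (R12s k1 k2) (k1 - 1) y' c"
      using comb_Z_R12s[of k1 k2 "k1 - 1" y' c] by (simp add: comb_Y_R12_at_neg_1)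
    then show ?thesis
      unfolding comb_Z_def using assms that by (auto intro!: J12_add J12_smult R12s_in_J12_nonneg)
  qed
  consider "2 \<le> y" | "y = 1" | "2 \<le> 2 - y" by linarith
  then show ?thesis
  proof cases
    case 1
    then show ?thesis by (rule main)
  next
    case 2
    then show ?thesis by (simp add: comb_Z_R12_at_1 J12_zero)
  next
    case 3
    then show ?thesis by (subst comb_Z_R12_reflect') (intro J12_uminus J12_smult main)
  qed
qed

lemma comb_Y_R12_in_J12_nonneg:
  assumes "1 \<le> k2" and "x \<le> - 1" and "0 \<le> c"
  shows "comb_Y R12 x (k2 + 1) c \<in> J12 k1 k2 {0..} {0..}"
proof -
  have main: "comb_Y R12 x' (k2 + 1) c \<in> J12 k1 k2 {0..} {0..}" if "0 \<le> x'" for x'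
  proof -
    have "comb_Y R12 x' (k2 + 1) c = comb_Y (R12s k1 k2) x' (k2 + 1) c"
      using comb_Y_R12s[of k1 k2 x' "k2 + 1" c] by (simp add: comb_Z_R12_at_1)
    then show ?thesis
      unfolding comb_Y_def using assms that by (auto intro!: J12_add J12_smult R12s_in_J12_nonneg)
  qed
  consider "x = - 1" | "0 \<le> - 2 - x" using assms(2) by linarith
  then show ?thesis
  proof cases
    case 1
    then show ?thesis by (simp add: comb_Y_R12_at_neg_1 J12_zero)
  next
    case 2
    then show ?thesis by (subst comb_Y_R12_reflect') (intro J12_uminus J12_smult main)
  qed
qed

lemma R12s_fst_ge_neg_1_in_J12_nonneg:
  assumes "1 \<le> k1" "1 \<le> k2" "- 1 \<le> x" "0 \<le> y" "0 \<le> c"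
  shows "R12s k1 k2 x y c \<in> J12 k1 k2 {0..} {0..}"
proof (cases "0 \<le> x \<or> y \<le> k2")
  case True
  then show ?thesis using assms by (intro R12s_in_J12_nonneg) auto
next
  case False
  then have "x = - 1" "k2 < y" using assms(3) by auto
  have "comb_Y (R12s k1 k2) (- 1) y c = - comb_Z R12 (k1 - 1) (k2 - y + 2) c"
    using comb_Y_R12s[of k1 k2 "- 1" y c] by (simp add: comb_Y_R12_at_neg_1)
  then have "R12s k1 k2 (- 1) y c = - comb_Z R12 (k1 - 1) (k2 - y + 2) c
      - (smult_F (Apow 4) (R12s k1 k2 1 (y - 2) c)
         + smult_F (Apow 2) (R12s k1 k2 0 (y - 1) (c + 1)) + smult_F (Apow 2) (R12s k1 k2 0 (y - 1) (c - 1)))"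
    unfolding comb_Y_def by (simp add: algebra_simps)
  then show ?thesis
    using assms \<open>x = - 1\<close> \<open>k2 < y\<close>
    by (auto intro!: J12_diff J12_uminus J12_add J12_smult comb_Z_R12_in_J12_nonneg R12s_in_J12_nonneg)
qed

lemma R12s_snd_ge_neg_1_in_J12_nonneg:
  assumes "1 \<le> k1" "1 \<le> k2" "0 \<le> x" "- 1 \<le> y" "0 \<le> c"
  shows "R12s k1 k2 x y c \<in> J12 k1 k2 {0..} {0..}"
proof (cases "0 \<le> y \<or> x \<le> k1")
  case True
  then show ?thesis using assms by (intro R12s_in_J12_nonneg) auto
next
  case False
  then have "y = - 1" "k1 < x" using assms(4) by auto
  have "comb_Z (R12s k1 k2) (x - 2) 1 c = - comb_Y R12 (k1 - x) (k2 + 1) c"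
    using comb_Z_R12s[of k1 k2 "x - 2" 1 c] by (simp add: comb_Z_R12_at_1 algebra_simps)
  then have "R12s k1 k2 x (- 1) c = - comb_Y R12 (k1 - x) (k2 + 1) c
      - (smult_F (Apow 4) (R12s k1 k2 (x - 2) 1 c)
         + smult_F (Apow 2) (R12s k1 k2 (x - 1) 0 (c + 1)) + smult_F (Apow 2) (R12s k1 k2 (x - 1) 0 (c - 1)))"
    unfolding comb_Z_def by (simp add: algebra_simps)
  then show ?thesis
    using assms \<open>y = - 1\<close> \<open>k1 < x\<close>
    by (auto intro!: J12_diff J12_uminus J12_add J12_smult comb_Y_R12_in_J12_nonneg R12s_in_J12_nonneg)
qed

lemma J12_eq_J12_nonneg:
  assumes "{0..} \<subseteq> I1" "{0..} \<subseteq> I2"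
    and "\<And>n1 n2 n3. real_of_int n1 \<in> I1 \<Longrightarrow> real_of_int n2 \<in> I2 \<Longrightarrow>
           R12s k1 k2 n1 n2 (int n3) \<in> J12 k1 k2 {0..} {0..}"
  shows "J12 k1 k2 I1 I2 = J12 k1 k2 {0..} {0..}"
  by (intro subset_antisym J12_subsetI[OF assms(3)] J12_mono assms(1,2))

theorem lemma4p3:
  fixes k1 k2 :: int
  assumes "k1 \<ge> 1" and "k2 \<ge> 1"
  shows "J12 k1 k2 {-1..} {0..} = J12 k1 k2 {0..} {-1..}
       \<and> J12 k1 k2 {0..} {-1..} = J12 k1 k2 {0..} {0..}"
proof -
  have "J12 k1 k2 {-1..} {0..} = J12 k1 k2 {0..} {0..}"
    using assms by (intro J12_eq_J12_nonneg R12s_fst_ge_neg_1_in_J12_nonneg) auto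
  moreover have "J12 k1 k2 {0..} {-1..} = J12 k1 k2 {0..} {0..}"
    using assms by (intro J12_eq_J12_nonneg R12s_snd_ge_neg_1_in_J12_nonneg) auto
  ultimately show ?thesis by simp
qed

end
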